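(* Let $\gamma>0$ and consider the closed-loop system $$\dot x_1(t)=x_2(t),\qquad \dot x_2(t)=u(t),$$ with the control $$u(t)=-\gamma\,\mathrm{sign}\bigl(x_1(t)\bigr)-\delta(t),\qquad \delta(t)=\begin{cases}|x_2(t)|\,|x_1(t)|^{-1}x_2(t) & \text{if } x_1(t)x_2(t)<0,\\ 0 & \text{otherwise.}\end{cases}$$ Suppose the initial state $x(0)=(x_1(0),x_2(0))$ satisfies $x_1(0)>0$, $x_1(0)x_2(0)<0$ and $x_2^2(0)<2\gamma|x_1(0)|$. Then the solution (while it remains in the fourth quadrant $\{x_1>0,\ x_2<0\}$) is given by $$x_1(t)=-\frac{\gamma}{\omega^2}\cos(\omega t+\phi)+B,\qquad x_2(t)=\frac{\gamma}{\omega}\sin(\omega t+\phi),$$ where $$B=\frac{\gamma\,x_1^2(0)}{2\gamma\,x_1(0)-x_2^2(0)},\qquad \phi=\pi+\arccos\Bigl(1-\frac{x_2^2(0)}{\gamma\,x_1(0)}\Bigr),\qquad \omega=\sqrt{\frac{\gamma}{B}}.$$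
   Context: This is the unperturbed case of a second-order system (double integrator) under a quasi-continuous feedback control. $\mathrm{sign}$ denotes the sign function; $\arccos$ takes values in $[0,\pi]$. *)

theory Defs
  imports "HOL-Analysis.Analysis"
begin

definition qc_delta :: "real \<Rightarrow> real \<Rightarrow> real" where
  "qc_delta x1 x2 = (if x1 * x2 < 0 then \<bar>x2\<bar> * inverse \<bar>x1\<bar> * x2 else 0)"

definition qc_control :: "real \<Rightarrow> real \<Rightarrow> real \<Rightarrow> real" where
  "qc_control \<gamma> x1 x2 = - \<gamma> * sgn x1 - qc_delta x1 x2"

end

theory Submission
  imports Defs
begin

text \<open>In the open fourth quadrant the control reduces to \<open>u = -\<gamma> + x\<^sub>2\<^sup>2 / x\<^sub>1\<close>, and
  \<open>H = (2 \<gamma> x\<^sub>1 - x\<^sub>2\<^sup>2) / x\<^sub>1\<^sup>2\<close> is a first integral, fixed at \<open>\<gamma> / B\<close> by the initial data.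
  On this level set the rescaled coordinates \<open>c = 1 - x\<^sub>1 / B\<close> and \<open>s = \<omega> x\<^sub>2 / \<gamma>\<close> obey the
  harmonic oscillator \<open>c' = -\<omega> s\<close>, \<open>s' = \<omega> c\<close>, whose solutions are determined by their initial
  value because \<open>(c - cos (\<omega> t + \<phi>))\<^sup>2 + (s - sin (\<omega> t + \<phi>))\<^sup>2\<close> has zero derivative.
  The phase \<open>\<phi> = \<pi> + arccos (\<dots>)\<close> is the polar angle of \<open>(c(0), s(0))\<close>, which lies in the lower
  half-plane since \<open>x\<^sub>2(0) < 0\<close>.\<close>

lemma qc_control_fourth_quadrant:
  assumes "x1 > 0" "x2 < 0"
  shows "qc_control \<gamma> x1 x2 = - \<gamma> + x2\<^sup>2 / x1"
proof -
  have "x1 * x2 < 0" using assms by (simp add: mult_pos_neg)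
  then show ?thesis using assms unfolding qc_control_def qc_delta_def
    by (simp add: power2_eq_square field_simps)
qed

lemma cos_sin_pi_plus_arccos:
  fixes a s :: real
  assumes "a\<^sup>2 + s\<^sup>2 = 1" "s \<le> 0"
  shows "cos (pi + arccos a) = - a" "sin (pi + arccos a) = s"
proof -
  have "a\<^sup>2 \<le> 1" using assms(1) by (metis le_add_same_cancel1 zero_le_power2)
  then have a: "-1 \<le> a" "a \<le> 1" by (auto simp: abs_square_le_1)
  then show "cos (pi + arccos a) = - a" by simp
  have "1 - a\<^sup>2 = s\<^sup>2" using assms(1) by simp
  then have "sqrt (1 - a\<^sup>2) = - s" using assms(2) by simp
  then show "sin (pi + arccos a) = s" using a by (simp add: sin_arccos)
qed

lemma reduced_dynamics_first_integral:
  fixes x1 x2 :: "real \<Rightarrow> real"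
  assumes "convex S" "t0 \<in> S" "t \<in> S"
    and nonzero: "\<And>t. t \<in> S \<Longrightarrow> x1 t \<noteq> 0"
    and ode1: "\<And>t. t \<in> S \<Longrightarrow> (x1 has_real_derivative x2 t) (at t within S)"
    and ode2: "\<And>t. t \<in> S \<Longrightarrow> (x2 has_real_derivative - \<gamma> + (x2 t)\<^sup>2 / x1 t) (at t within S)"
  shows "(2 * \<gamma> * x1 t - (x2 t)\<^sup>2) / (x1 t)\<^sup>2 = (2 * \<gamma> * x1 t0 - (x2 t0)\<^sup>2) / (x1 t0)\<^sup>2"
proof -
  have "\<exists>C. \<forall>t\<in>S. (2 * \<gamma> * x1 t - (x2 t)\<^sup>2) / (x1 t)\<^sup>2 = C"
  proof (rule has_field_derivative_zero_constant[OF \<open>convex S\<close>])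
    fix t assume t: "t \<in> S"
    show "((\<lambda>t. (2 * \<gamma> * x1 t - (x2 t)\<^sup>2) / (x1 t)\<^sup>2) has_real_derivative 0) (at t within S)"
      by (rule derivative_eq_intros ode1[OF t] ode2[OF t] refl)+
        (use nonzero[OF t] in \<open>auto simp: field_simps power2_eq_square\<close>)
  qed
  then show ?thesis using assms(2,3) by auto
qed

lemma harmonic_oscillator_unique:
  fixes c s :: "real \<Rightarrow> real"
  assumes "convex S" "t0 \<in> S" "t \<in> S"
    and dc: "\<And>t. t \<in> S \<Longrightarrow> (c has_real_derivative - \<omega> * s t) (at t within S)"
    and ds: "\<And>t. t \<in> S \<Longrightarrow> (s has_real_derivative \<omega> * c t) (at t within S)"
    and init: "c t0 = cos (\<omega> * t0 + \<phi>)" "s t0 = sin (\<omega> * t0 + \<phi>)"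
  shows "c t = cos (\<omega> * t + \<phi>) \<and> s t = sin (\<omega> * t + \<phi>)"
proof -
  define E where "E t = (c t - cos (\<omega> * t + \<phi>))\<^sup>2 + (s t - sin (\<omega> * t + \<phi>))\<^sup>2" for t
  have "\<exists>C. \<forall>t\<in>S. E t = C"
  proof (rule has_field_derivative_zero_constant[OF \<open>convex S\<close>])
    fix t assume t: "t \<in> S"
    show "(E has_real_derivative 0) (at t within S)"
      unfolding E_def
      by (rule derivative_eq_intros dc[OF t] ds[OF t] refl)+ (simp add: algebra_simps)
  qed
  then have "E t = E t0" using assms(2,3) by auto
  also have "E t0 = 0" unfolding E_def using init by simp
  finally show ?thesis unfolding E_def by simp
qed

lemma reduced_dynamics_solution:
  fixes x1 x2 :: "real \<Rightarrow> real"
  assumes "convex S" "0 \<in> S" "t \<in> S"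
    and "\<gamma> > 0" "B > 0" and omega: "\<omega>\<^sup>2 = \<gamma> / B"
    and energy: "2 * \<gamma> * x1 0 - (x2 0)\<^sup>2 = \<gamma> / B * (x1 0)\<^sup>2"
    and nonzero: "\<And>t. t \<in> S \<Longrightarrow> x1 t \<noteq> 0"
    and ode1: "\<And>t. t \<in> S \<Longrightarrow> (x1 has_real_derivative x2 t) (at t within S)"
    and ode2: "\<And>t. t \<in> S \<Longrightarrow> (x2 has_real_derivative - \<gamma> + (x2 t)\<^sup>2 / x1 t) (at t within S)"
    and phase: "cos \<phi> = 1 - x1 0 / B" "sin \<phi> = \<omega> * x2 0 / \<gamma>"
  shows "x1 t = - (\<gamma> / \<omega>\<^sup>2) * cos (\<omega> * t + \<phi>) + B \<and> x2 t = (\<gamma> / \<omega>) * sin (\<omega> * t + \<phi>)"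
proof -
  have energy_along: "(x2 t)\<^sup>2 = 2 * \<gamma> * x1 t - \<gamma> / B * (x1 t)\<^sup>2" if t: "t \<in> S" for t
  proof -
    have "(2 * \<gamma> * x1 t - (x2 t)\<^sup>2) / (x1 t)\<^sup>2 = \<gamma> / B"
      using reduced_dynamics_first_integral[OF \<open>convex S\<close> \<open>0 \<in> S\<close> t nonzero ode1 ode2]
        energy nonzero[OF \<open>0 \<in> S\<close>] by simp
    then show ?thesis using nonzero[OF t] by (simp add: field_simps)
  qed
  define c where "c t = 1 - x1 t / B" for t
  define s where "s t = \<omega> * x2 t / \<gamma>" for t
  have "c t = cos (\<omega> * t + \<phi>) \<and> s t = sin (\<omega> * t + \<phi>)"
  proof (rule harmonic_oscillator_unique[OF \<open>convex S\<close> \<open>0 \<in> S\<close> \<open>t \<in> S\<close>])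
    fix t assume t: "t \<in> S"
    show "(c has_real_derivative - \<omega> * s t) (at t within S)"
      unfolding c_def s_def
      by (rule DERIV_cong[OF DERIV_diff[OF DERIV_const DERIV_cdivide[OF ode1[OF t]]]])
        (use omega \<open>\<gamma> > 0\<close> \<open>B > 0\<close> in \<open>simp add: field_simps power2_eq_square\<close>)
    have "- \<gamma> + (x2 t)\<^sup>2 / x1 t = \<gamma> * c t"
      unfolding c_def energy_along[OF t] using nonzero[OF t] \<open>B > 0\<close>
      by (simp add: field_simps power2_eq_square)
    then show "(s has_real_derivative \<omega> * c t) (at t within S)"
      unfolding s_def using \<open>\<gamma> > 0\<close>
      by (intro DERIV_cong[OF DERIV_cdivide[OF DERIV_cmult[OF ode2[OF t]]]]) simp
  qed (use phase c_def s_def in simp_all)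
  moreover have "\<gamma> / \<omega>\<^sup>2 = B" "\<omega> \<noteq> 0" using omega \<open>\<gamma> > 0\<close> \<open>B > 0\<close> by auto
  ultimately show ?thesis unfolding c_def s_def using \<open>\<gamma> > 0\<close> \<open>B > 0\<close> by (auto simp: field_simps)
qed

lemma initial_amplitude_and_phase:
  fixes \<gamma> p q B \<omega> :: real
  assumes "\<gamma> > 0" "p > 0" "q < 0" "q\<^sup>2 < 2 * \<gamma> * p"
    and B_def: "B = \<gamma> * p\<^sup>2 / (2 * \<gamma> * p - q\<^sup>2)"
    and \<omega>_def: "\<omega> = sqrt (\<gamma> / B)"
  shows "B > 0" "\<omega>\<^sup>2 = \<gamma> / B" "2 * \<gamma> * p - q\<^sup>2 = \<gamma> / B * p\<^sup>2"
    "cos (pi + arccos (1 - q\<^sup>2 / (\<gamma> * p))) = 1 - p / B"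
    "sin (pi + arccos (1 - q\<^sup>2 / (\<gamma> * p))) = \<omega> * q / \<gamma>"
proof -
  define a where "a = 1 - q\<^sup>2 / (\<gamma> * p)"
  have den: "2 * \<gamma> * p - q\<^sup>2 > 0" using assms(4) by simp
  then show "B > 0" unfolding B_def using assms(1,2) by simp
  then show omega: "\<omega>\<^sup>2 = \<gamma> / B" unfolding \<omega>_def using assms(1) by simp
  show "2 * \<gamma> * p - q\<^sup>2 = \<gamma> / B * p\<^sup>2"
    unfolding B_def using den assms(1,2) by (simp add: field_simps)
  have "a\<^sup>2 + (\<omega> * q / \<gamma>)\<^sup>2 = 1"
    unfolding a_def power_divide power_mult_distrib omega B_def
    using den assms(1,2) by (simp add: field_simps power2_eq_square)
  moreover have "\<omega> * q / \<gamma> \<le> 0"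
    unfolding \<omega>_def using assms(1,3) \<open>B > 0\<close> by (simp add: divide_nonpos_pos mult_nonneg_nonpos)
  moreover have "- a = 1 - p / B"
    unfolding a_def B_def using den assms(1,2) by (simp add: field_simps power2_eq_square)
  ultimately show "cos (pi + arccos (1 - q\<^sup>2 / (\<gamma> * p))) = 1 - p / B"
    "sin (pi + arccos (1 - q\<^sup>2 / (\<gamma> * p))) = \<omega> * q / \<gamma>"
    using cos_sin_pi_plus_arccos unfolding a_def by metis+
qed

theorem proposition1:
  fixes \<gamma> T :: real and x1 x2 :: "real \<Rightarrow> real"
  assumes gamma_pos: "\<gamma> > 0"
    and T_nonneg: "T \<ge> 0"
    and ode1: "\<And>t. t \<in> {0..T} \<Longrightarrow> (x1 has_real_derivative x2 t) (at t within {0..T})"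
    and ode2: "\<And>t. t \<in> {0..T} \<Longrightarrow>
                 (x2 has_real_derivative qc_control \<gamma> (x1 t) (x2 t)) (at t within {0..T})"
    and quadrant: "\<And>t. t \<in> {0..T} \<Longrightarrow> x1 t > 0 \<and> x2 t < 0"
    and init1: "x1 0 > 0"
    and init2: "x1 0 * x2 0 < 0"
    and init3: "(x2 0)\<^sup>2 < 2 * \<gamma> * \<bar>x1 0\<bar>"
  shows "let B = \<gamma> * (x1 0)\<^sup>2 / (2 * \<gamma> * x1 0 - (x2 0)\<^sup>2);
             \<phi> = pi + arccos (1 - (x2 0)\<^sup>2 / (\<gamma> * x1 0));
             \<omega> = sqrt (\<gamma> / B)
         in \<forall>t \<in> {0..T}. x1 t = - (\<gamma> / \<omega>\<^sup>2) * cos (\<omega> * t + \<phi>) + B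
                         \<and> x2 t = (\<gamma> / \<omega>) * sin (\<omega> * t + \<phi>)"
proof -
  define B where "B = \<gamma> * (x1 0)\<^sup>2 / (2 * \<gamma> * x1 0 - (x2 0)\<^sup>2)"
  define \<phi> where "\<phi> = pi + arccos (1 - (x2 0)\<^sup>2 / (\<gamma> * x1 0))"
  define \<omega> where "\<omega> = sqrt (\<gamma> / B)"
  have "x2 0 < 0" using init1 init2 by (simp add: mult_less_0_iff)
  then have B: "B > 0" "\<omega>\<^sup>2 = \<gamma> / B" "2 * \<gamma> * x1 0 - (x2 0)\<^sup>2 = \<gamma> / B * (x1 0)\<^sup>2"
    and phase: "cos \<phi> = 1 - x1 0 / B" "sin \<phi> = \<omega> * x2 0 / \<gamma>"
    using initial_amplitude_and_phase[OF gamma_pos init1 _ _ B_def \<omega>_def] init1 init3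
    unfolding \<phi>_def by auto
  have reduced_ode2: "(x2 has_real_derivative - \<gamma> + (x2 t)\<^sup>2 / x1 t) (at t within {0..T})"
    if "t \<in> {0..T}" for t
    using ode2[OF that] quadrant[OF that] qc_control_fourth_quadrant by metis
  have "x1 t = - (\<gamma> / \<omega>\<^sup>2) * cos (\<omega> * t + \<phi>) + B \<and> x2 t = (\<gamma> / \<omega>) * sin (\<omega> * t + \<phi>)"
    if "t \<in> {0..T}" for t
    using reduced_dynamics_solution[OF _ _ that gamma_pos B _ ode1 reduced_ode2 phase]
      quadrant T_nonneg by force
  then show ?thesis unfolding Let_def B_def[symmetric] \<phi>_def[symmetric] \<omega>_def[symmetric] by blast
qed

end
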